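(* Let $\mathbf p=(p_1,\dots,p_n)$ be positive integers, $c\in[0,1]$, and $P=(p_1+\cdots+p_n)/\gcd(p_1,\dots,p_n)$. Write $S_c(\mathbf p)=(s_1,s_2,\dots)$. Then $s_{mP+k}=s_k$ for all integers $m\ge1$ and $k\ge1$. Moreover, $P$ is the minimal period of $S_c(\mathbf p)$.
   Context: Stationary divisor method with cut point $c\in[0,1]$: seats are allocated one at a time. Initially each party $i$ has $a_i=0$ seats; each next seat goes to a party $i$ maximizing $p_i/(a_i+c)$, whose $a_i$ then increases by $1$. Ties are broken in favor of the smallest index; parties are indexed so that $p_1\ge\cdots\ge p_n$. For $c=0$ the convention is that $p_i/0>p_j/0$ whenever $p_i>p_j$, and $p_i/0>p_j/k$ for every $k>0$. $S_c(\mathbf p)=(s_1,s_2,\dots)$ is the infinite sequence in which $s_j$ is the index of the party receiving the $j$-th seat. *)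

theory Defs
  imports Complex_Main
begin

text \<open>Parties are indexed 1..n with populations p i. An allocation is a map
  a :: nat => nat (seats held by each party). \<open>sd_better c p a i j\<close> says that
  the quotient p_i/(a_i+c) is strictly larger than p_j/(a_j+c), with the
  convention for zero denominators (c = 0) from the paper: p_i/0 > p_j/0 iff
  p_i > p_j, and p_i/0 > p_j/k for all k > 0.  For positive p this is cross
  multiplication unless both denominators vanish.\<close>

definition sd_better :: "real \<Rightarrow> (nat \<Rightarrow> nat) \<Rightarrow> (nat \<Rightarrow> nat) \<Rightarrow> nat \<Rightarrow> nat \<Rightarrow> bool" where
  "sd_better c p a i j \<longleftrightarrow>
     (if real (a i) + c = 0 \<and> real (a j) + c = 0 then p i > p j
      else real (p i) * (real (a j) + c) > real (p j) * (real (a i) + c))"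

definition sd_winner :: "real \<Rightarrow> (nat \<Rightarrow> nat) \<Rightarrow> nat \<Rightarrow> (nat \<Rightarrow> nat) \<Rightarrow> nat" where
  "sd_winner c p n a = (LEAST i. i \<in> {1..n} \<and> (\<forall>j\<in>{1..n}. \<not> sd_better c p a j i))"

fun sd_alloc :: "real \<Rightarrow> (nat \<Rightarrow> nat) \<Rightarrow> nat \<Rightarrow> nat \<Rightarrow> (nat \<Rightarrow> nat)" where
  "sd_alloc c p n 0 = (\<lambda>_. 0)"
| "sd_alloc c p n (Suc t) =
     (let a = sd_alloc c p n t; w = sd_winner c p n a in a(w := a w + 1))"

text \<open>The sequence S_c(p) = (s_1, s_2, ...): s_j is the party receiving the
  j-th seat (meaningful for j >= 1).\<close>
definition sd_seq :: "real \<Rightarrow> (nat \<Rightarrow> nat) \<Rightarrow> nat \<Rightarrow> nat \<Rightarrow> nat" where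
  "sd_seq c p n j = sd_winner c p n (sd_alloc c p n (j - 1))"

end

theory Submission
  imports Defs
begin

text \<open>Write T = p(1) + ... + p(n). Because c \<le> 1, a party holding fewer than p(j) seats
  always beats a party already holding at least p(w) seats, so after T seats every party i
  holds exactly p(i) seats. Adding p(i) to every a(i) turns each comparison
  p(j) (a(i) + c) < p(i) (a(j) + c) into an equivalent one, except for the tie among
  seatless parties when c = 0, which is broken by population before the shift and by index
  after it; the two agree because the populations are sorted. Hence the allocation after
  T + t seats is p + a(t), and T is a period. If Q is any period, seat counts are additive
  over blocks of Q seats; counting the seats of party i among the first T Q seats in two
  ways shows that T divides Q p(i) for every i, hence T divides Q gcd(p). Dividing p by its
  gcd changes no comparison, which reduces the theorem to the case gcd(p) = 1.\<close>

text \<open>A real-valued key that every winning comparison strictly increases: an infinite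
  quotient p(i)/0 is placed above all finite ones, which are at most the total population.\<close>

definition sd_priority :: "real \<Rightarrow> (nat \<Rightarrow> nat) \<Rightarrow> nat \<Rightarrow> (nat \<Rightarrow> nat) \<Rightarrow> nat \<Rightarrow> real" where
  "sd_priority c p n a i =
     (if real (a i) + c = 0 then real (\<Sum>j=1..n. p j) + real (p i)
      else real (p i) / (real (a i) + c))"

lemma sd_better_imp_priority_less:
  assumes c: "0 \<le> c" and i: "i \<in> {1..n}" and better: "sd_better c p a j i"
  shows "sd_priority c p n a i < sd_priority c p n a j"
proof (cases "real (a j) + c = 0")
  case j0: True
  show ?thesis
  proof (cases "real (a i) + c = 0")
    case True
    then show ?thesis using j0 better by (simp add: sd_priority_def sd_better_def)
  next
    case i_pos: False
    have "c = 0" "a j = 0" "1 \<le> a i" using j0 i_pos c by linarith+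
    then have "0 < p j" using better i_pos by (simp add: sd_better_def zero_less_mult_iff)
    have "real (p i) / real (a i) \<le> real (p i)"
      using \<open>1 \<le> a i\<close> by (simp add: divide_le_eq mult_le_cancel_left1)
    moreover have "real (p i) \<le> (\<Sum>j=1..n. real (p j))"
      using i by (intro member_le_sum) auto
    ultimately show ?thesis
      using i_pos j0 \<open>c = 0\<close> \<open>0 < p j\<close> by (simp add: sd_priority_def)
  qed
next
  case j_pos: False
  have "real (a i) + c \<noteq> 0"
  proof
    assume i0: "real (a i) + c = 0"
    have "0 \<le> real (p i) * (real (a j) + c)" using c by simp
    with better i0 j_pos show False by (simp add: sd_better_def)
  qed
  then have "0 < real (a i) + c" "0 < real (a j) + c" using c j_pos by linarith+
  then show ?thesis
    using better j_pos by (simp add: sd_priority_def sd_better_def divide_less_eq less_divide_eq mult.commute)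
qed

lemma sd_winner_eqI:
  assumes "i \<in> {1..n}" and "\<forall>j\<in>{1..n}. \<not> sd_better c p a j i"
    and "\<forall>j\<in>{1..n}. j < i \<longrightarrow> sd_better c p a i j"
  shows "sd_winner c p n a = i"
  unfolding sd_winner_def
proof (rule Least_equality)
  fix k assume "k \<in> {1..n} \<and> (\<forall>j\<in>{1..n}. \<not> sd_better c p a j k)"
  then show "i \<le> k" using assms(1,3) by (meson not_le)
qed (use assms in blast)

lemma sd_winner_cong:
  assumes "\<And>i j. i \<in> {1..n} \<Longrightarrow> j \<in> {1..n} \<Longrightarrow>
    sd_better c p a i j = sd_better c' p' b i j"
  shows "sd_winner c p n a = sd_winner c' p' n b"
  unfolding sd_winner_def by (metis assms)

context
  fixes c :: real and p :: "nat \<Rightarrow> nat" and n :: nat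
  assumes n_ge_1: "1 \<le> n" and c_nonneg: "0 \<le> c"
begin

lemma
  shows sd_winner_mem: "sd_winner c p n a \<in> {1..n}"
    and sd_winner_undominated: "j \<in> {1..n} \<Longrightarrow> \<not> sd_better c p a j (sd_winner c p n a)"
proof -
  obtain i where i: "i \<in> {1..n}"
    and max: "Max (sd_priority c p n a ` {1..n}) = sd_priority c p n a i"
    using obtains_MAX[of "{1..n}"] n_ge_1 by auto
  have "\<not> sd_better c p a j i" if "j \<in> {1..n}" for j
    using sd_better_imp_priority_less[OF c_nonneg i] max that
    by (metis Max_ge finite_atLeastAtMost finite_imageI imageI leD)
  with i have "i \<in> {1..n} \<and> (\<forall>j\<in>{1..n}. \<not> sd_better c p a j i)" by blast
  then have "sd_winner c p n a \<in> {1..n} \<and> (\<forall>j\<in>{1..n}. \<not> sd_better c p a j (sd_winner c p n a))"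
    unfolding sd_winner_def by (rule LeastI)
  then show "sd_winner c p n a \<in> {1..n}" "j \<in> {1..n} \<Longrightarrow> \<not> sd_better c p a j (sd_winner c p n a)"
    by blast+
qed

lemma sd_alloc_sum: "(\<Sum>i=1..n. sd_alloc c p n t i) = t"
proof (induction t)
  case 0
  then show ?case by simp
next
  case (Suc t)
  define a where "a = sd_alloc c p n t"
  define w where "w = sd_winner c p n a"
  have "w \<in> {1..n}" unfolding w_def by (rule sd_winner_mem)
  have "(\<Sum>i=1..n. (a(w := a w + 1)) i) = (\<Sum>i=1..n. a i + (if i = w then 1 else 0))"
    by (rule sum.cong) auto
  also have "\<dots> = (\<Sum>i=1..n. a i) + 1"
    using \<open>w \<in> {1..n}\<close> by (simp add: sum.distrib)
  finally show ?case using Suc by (simp add: a_def w_def Let_def)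
qed

end

lemma sd_seq_Suc: "sd_seq c p n (Suc t) = sd_winner c p n (sd_alloc c p n t)"
  by (simp add: sd_seq_def)

lemma sd_alloc_add_period:
  assumes "\<forall>k\<ge>1. sd_seq c p n (Q + k) = sd_seq c p n k"
  shows "sd_alloc c p n (Q + t) i = sd_alloc c p n Q i + sd_alloc c p n t i"
proof (induction t arbitrary: i)
  case 0
  then show ?case by simp
next
  case (Suc t)
  have "sd_winner c p n (sd_alloc c p n (Q + t)) = sd_winner c p n (sd_alloc c p n t)"
    using assms[rule_format, of "Suc t"] by (simp add: sd_seq_Suc)
  then show ?case using Suc by (simp add: Let_def)
qed

lemma sd_alloc_mult_period:
  assumes "\<forall>k\<ge>1. sd_seq c p n (Q + k) = sd_seq c p n k"
  shows "sd_alloc c p n (m * Q) i = m * sd_alloc c p n Q i"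
  by (induction m) (simp_all add: sd_alloc_add_period[OF assms])

lemma sd_seq_scale:
  assumes "0 < g" and "\<forall>i\<in>{1..n}. p i = g * q i"
  shows "sd_seq c p n = sd_seq c q n"
proof -
  have "sd_better c p a i j = sd_better c q a i j" if "i \<in> {1..n}" "j \<in> {1..n}" for a i j
    using assms that by (simp add: sd_better_def)
  then have winner: "sd_winner c p n a = sd_winner c q n a" for a
    by (intro sd_winner_cong)
  then have alloc: "sd_alloc c p n t = sd_alloc c q n t" for t
    by (induction t) simp_all
  show ?thesis by (rule ext) (simp add: sd_seq_def alloc winner)
qed

lemma Gcd_image_div_Gcd:
  fixes f :: "'a \<Rightarrow> nat"
  assumes "Gcd (f ` A) \<noteq> 0"
  shows "Gcd ((\<lambda>x. f x div Gcd (f ` A)) ` A) = 1"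
proof -
  let ?g = "Gcd (f ` A)"
  have "?g * Gcd ((\<lambda>x. f x div ?g) ` A) = Gcd ((*) ?g ` (\<lambda>x. f x div ?g) ` A)"
    by (simp only: Gcd_mult normalize_nat_def id_apply)
  also have "(*) ?g ` (\<lambda>x. f x div ?g) ` A = f ` A"
    unfolding image_image by (rule image_cong) (simp_all add: Gcd_dvd)
  finally have "?g * Gcd ((\<lambda>x. f x div ?g) ` A) = ?g * 1" by (simp only: mult_1_right)
  then show ?thesis by (rule mult_left_cancel[OF assms, THEN iffD1])
qed

lemma sd_winner_shift:
  assumes pos: "\<forall>i\<in>{1..n}. 0 < p i"
    and sorted: "\<forall>i\<in>{1..n}. \<forall>j\<in>{1..n}. i \<le> j \<longrightarrow> p j \<le> p i"
    and c: "0 \<le> c" and shifted: "\<forall>i\<in>{1..n}. b i = p i + a i"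
  shows "sd_winner c p n b = sd_winner c p n a"
proof -
  have better_b: "sd_better c p b i j \<longleftrightarrow>
      real (p j) * (real (a i) + c) < real (p i) * (real (a j) + c)"
    if "i \<in> {1..n}" "j \<in> {1..n}" for i j
  proof -
    have "0 < real (p i)" "0 \<le> real (a i)" using pos that(1) by simp_all
    then have "real (b i) + c \<noteq> 0" using shifted that(1) c by simp
    then show ?thesis using that shifted by (simp add: sd_better_def algebra_simps)
  qed
  show ?thesis
  proof (cases "\<forall>i\<in>{1..n}. real (a i) + c \<noteq> 0")
    case True
    show ?thesis
    proof (rule sd_winner_cong)
      fix i j assume i: "i \<in> {1..n}" and j: "j \<in> {1..n}"
      show "sd_better c p b i j = sd_better c p a i j"
        using better_b[OF i j] True i by (simp add: sd_better_def[of c p a])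
    qed
  next
    case False
    then have "c = 0" and "\<exists>i. i \<in> {1..n} \<and> a i = 0" using c by force+
    define i0 where "i0 = (LEAST i. i \<in> {1..n} \<and> a i = 0)"
    have i0: "i0 \<in> {1..n}" "a i0 = 0"
      using LeastI_ex[OF \<open>\<exists>i. i \<in> {1..n} \<and> a i = 0\<close>] by (simp_all add: i0_def)
    have before_i0: "0 < a j" if "j \<in> {1..n}" "j < i0" for j
      using not_less_Least[of j "\<lambda>i. i \<in> {1..n} \<and> a i = 0"] that by (auto simp: i0_def)
    have zero_after_i0: "p j \<le> p i0" if "j \<in> {1..n}" "a j = 0" for j
      using Least_le[of "\<lambda>i. i \<in> {1..n} \<and> a i = 0" j] that sorted i0(1) by (auto simp: i0_def)
    have "sd_winner c p n b = i0"
    proof (rule sd_winner_eqI[OF i0(1)])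
      show "\<forall>j\<in>{1..n}. \<not> sd_better c p b j i0"
        using better_b i0 \<open>c = 0\<close> by (simp add: not_less)
      show "\<forall>j\<in>{1..n}. j < i0 \<longrightarrow> sd_better c p b i0 j"
        using better_b i0 before_i0 pos \<open>c = 0\<close> by simp
    qed
    moreover have "sd_winner c p n a = i0"
    proof (rule sd_winner_eqI[OF i0(1)])
      show "\<forall>j\<in>{1..n}. \<not> sd_better c p a j i0"
        using zero_after_i0 i0(2) \<open>c = 0\<close> by (simp add: sd_better_def not_less)
      show "\<forall>j\<in>{1..n}. j < i0 \<longrightarrow> sd_better c p a i0 j"
        using before_i0 i0 pos \<open>c = 0\<close> by (force simp: sd_better_def)
    qed
    ultimately show ?thesis by simp
  qed
qed

context
  fixes c :: real and p :: "nat \<Rightarrow> nat" and n :: nat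
  assumes n_ge_1: "1 \<le> n" and pos: "\<forall>i\<in>{1..n}. 0 < p i"
    and c_nonneg: "0 \<le> c" and c_le_1: "c \<le> 1"
begin

lemma sd_better_if_under_and_full:
  assumes "j \<in> {1..n}" and "w \<in> {1..n}" and under: "a j < p j" and full: "p w \<le> a w"
  shows "sd_better c p a j w"
proof -
  have pj: "1 \<le> real (p j)" and pw: "1 \<le> real (p w)"
    using assms(1,2) pos by (simp_all add: Suc_le_eq)
  have "real (a j) + 1 \<le> real (p j)" "real (p w) \<le> real (a w)"
    using under full by (simp_all add: Suc_le_eq[symmetric])
  then have aj: "real (a j) + c \<le> real (p j) - 1 + c" and aw: "real (p w) + c \<le> real (a w) + c"
    by linarith+
  have "c \<le> real (p j) * c" "1 - c \<le> real (p w) * (1 - c)"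
    using mult_right_mono[OF pj, of c] mult_right_mono[OF pw, of "1 - c"] c_nonneg c_le_1
    by simp_all
  then have gap: "0 < real (p j) * c + real (p w) * (1 - c)" by linarith
  have "real (p w) * (real (a j) + c) \<le> real (p w) * (real (p j) - 1 + c)"
    using aj by (rule mult_left_mono) simp
  also have "\<dots> < real (p j) * (real (p w) + c)"
    using gap by (simp add: algebra_simps)
  also have "\<dots> \<le> real (p j) * (real (a w) + c)"
    using aw by (rule mult_left_mono) simp
  finally show ?thesis
    using pw aw c_nonneg by (simp add: sd_better_def)
qed

lemma sd_alloc_le_pop:
  "t \<le> (\<Sum>i=1..n. p i) \<Longrightarrow> i \<in> {1..n} \<Longrightarrow> sd_alloc c p n t i \<le> p i"
proof (induction t arbitrary: i)
  case 0
  then show ?case by simp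
next
  case (Suc t)
  define a where "a = sd_alloc c p n t"
  define w where "w = sd_winner c p n a"
  have "(\<Sum>i=1..n. a i) < (\<Sum>i=1..n. p i)"
    using sd_alloc_sum[OF n_ge_1 c_nonneg] Suc.prems(1) by (simp add: a_def)
  then obtain j where j: "j \<in> {1..n}" "a j < p j"
    by (meson not_less sum_mono)
  have w: "w \<in> {1..n}" "\<not> sd_better c p a j w"
    unfolding w_def using sd_winner_mem[OF n_ge_1 c_nonneg] sd_winner_undominated[OF n_ge_1 c_nonneg j(1)]
    by blast+
  then have "a w < p w"
    using sd_better_if_under_and_full[of j w a] j by (meson not_less)
  moreover have "a i \<le> p i"
    using Suc by (simp add: a_def)
  moreover have "sd_alloc c p n (Suc t) = a(w := a w + 1)"
    by (simp add: a_def w_def Let_def)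
  ultimately show ?case by auto
qed

lemma sd_alloc_total_pop: "i \<in> {1..n} \<Longrightarrow> sd_alloc c p n (\<Sum>i=1..n. p i) i = p i"
  using sd_alloc_sum[OF n_ge_1 c_nonneg] sd_alloc_le_pop
  by (intro sum_mono_inv[where f = "sd_alloc c p n (\<Sum>i=1..n. p i)" and I = "{1..n}"]) auto

context
  assumes sorted: "\<forall>i\<in>{1..n}. \<forall>j\<in>{1..n}. i \<le> j \<longrightarrow> p j \<le> p i"
begin

lemma sd_alloc_shift:
  "i \<in> {1..n} \<Longrightarrow> sd_alloc c p n ((\<Sum>i=1..n. p i) + t) i = p i + sd_alloc c p n t i"
proof (induction t arbitrary: i)
  case 0
  then have "sd_alloc c p n (\<Sum>i=1..n. p i) i = p i" by (rule sd_alloc_total_pop)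
  then show ?case by simp
next
  case (Suc t)
  have "sd_winner c p n (sd_alloc c p n ((\<Sum>i=1..n. p i) + t)) = sd_winner c p n (sd_alloc c p n t)"
    using Suc.IH by (intro sd_winner_shift[OF pos sorted c_nonneg]) blast
  then show ?case using Suc by (simp add: Let_def)
qed

lemma sd_seq_period: "1 \<le> k \<Longrightarrow> sd_seq c p n (m * (\<Sum>i=1..n. p i) + k) = sd_seq c p n k"
proof (induction m)
  case 0
  then show ?case by simp
next
  case (Suc m)
  then obtain t where t: "m * (\<Sum>i=1..n. p i) + k = Suc t" by (metis add_Suc_right le_iff_add plus_1_eq_Suc)
  have "sd_winner c p n (sd_alloc c p n ((\<Sum>i=1..n. p i) + t)) = sd_winner c p n (sd_alloc c p n t)"
    using sd_alloc_shift by (intro sd_winner_shift[OF pos sorted c_nonneg]) blast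
  then have "sd_seq c p n ((\<Sum>i=1..n. p i) + Suc t) = sd_seq c p n (Suc t)"
    by (simp add: sd_seq_Suc)
  then show ?case using Suc t by (simp add: add.assoc)
qed

lemma sd_period_dvd:
  assumes period: "\<forall>k\<ge>1. sd_seq c p n (Q + k) = sd_seq c p n k"
  shows "(\<Sum>i=1..n. p i) dvd Q * Gcd (p ` {1..n})"
proof -
  let ?T = "\<Sum>i=1..n. p i"
  have T_period: "\<forall>k\<ge>1. sd_seq c p n (?T + k) = sd_seq c p n k"
    using sd_seq_period[where m = 1] by simp
  have "?T dvd Q * p i" if "i \<in> {1..n}" for i
  proof -
    have "?T * sd_alloc c p n Q i = sd_alloc c p n (?T * Q) i"
      by (rule sd_alloc_mult_period[OF period, symmetric])
    also have "\<dots> = Q * sd_alloc c p n ?T i"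
      using sd_alloc_mult_period[OF T_period] by (simp add: mult.commute)
    also have "\<dots> = Q * p i"
      using sd_alloc_total_pop[OF that] by simp
    finally show ?thesis by (metis dvd_triv_left)
  qed
  then have "?T dvd Gcd ((\<lambda>i. Q * p i) ` {1..n})"
    by (auto intro: Gcd_greatest)
  also have "Gcd ((\<lambda>i. Q * p i) ` {1..n}) = Q * Gcd (p ` {1..n})"
    using Gcd_mult[of Q "p ` {1..n}"] by (simp add: image_image)
  finally show ?thesis .
qed

lemma sd_seq_minimal_period_coprime:
  assumes "Gcd (p ` {1..n}) = 1"
  shows "(\<forall>m. \<forall>k\<ge>1. sd_seq c p n (m * (\<Sum>i=1..n. p i) + k) = sd_seq c p n k)
    \<and> 1 \<le> (\<Sum>i=1..n. p i)
    \<and> (\<forall>Q\<ge>1. (\<forall>k\<ge>1. sd_seq c p n (Q + k) = sd_seq c p n k) \<longrightarrow>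
          (\<Sum>i=1..n. p i) \<le> Q)"
proof -
  have "1 \<in> {1..n}" using n_ge_1 by simp
  then have "1 \<le> p 1" and "p 1 \<le> (\<Sum>i=1..n. p i)"
    using pos by (auto simp: Suc_le_eq intro: member_le_sum)
  then show ?thesis
    using sd_seq_period sd_period_dvd assms by (auto intro: dvd_imp_le)
qed

end

end

theorem mainTheorem4:
  fixes p :: "nat \<Rightarrow> nat" and n :: nat and c :: real
  assumes "n \<ge> 1"
    and "\<forall>i\<in>{1..n}. p i > 0"
    and "\<forall>i\<in>{1..n}. \<forall>j\<in>{1..n}. i \<le> j \<longrightarrow> p i \<ge> p j"
    and "0 \<le> c" and "c \<le> 1"
  defines "P \<equiv> (\<Sum>i=1..n. p i) div Gcd (p ` {1..n})"
  shows "(\<forall>m\<ge>1. \<forall>k\<ge>1. sd_seq c p n (m * P + k) = sd_seq c p n k)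
    \<and> P \<ge> 1
    \<and> (\<forall>Q\<ge>1. (\<forall>k\<ge>1. sd_seq c p n (Q + k) = sd_seq c p n k) \<longrightarrow> P \<le> Q)"
proof -
  define G where "G = Gcd (p ` {1..n})"
  define q where "q i = p i div G" for i
  have "G \<noteq> 0"
    using assms(1,2) unfolding G_def Gcd_0_iff by (fastforce simp: Ball_def)
  have p_eq: "\<forall>i\<in>{1..n}. p i = G * q i"
    by (simp add: q_def G_def Gcd_dvd)
  have q_pos: "\<forall>i\<in>{1..n}. 0 < q i"
    using assms(2) p_eq by (metis mult_0_right neq0_conv)
  have q_sorted: "\<forall>i\<in>{1..n}. \<forall>j\<in>{1..n}. i \<le> j \<longrightarrow> q j \<le> q i"
    using assms(3) by (simp add: q_def div_le_mono)
  have q_coprime: "Gcd (q ` {1..n}) = 1"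
    using Gcd_image_div_Gcd \<open>G \<noteq> 0\<close> by (simp add: q_def G_def)
  have "(\<Sum>i=1..n. p i) = G * (\<Sum>i=1..n. q i)"
    unfolding sum_distrib_left using p_eq by (intro sum.cong) auto
  then have "P = (\<Sum>i=1..n. q i)"
    using \<open>G \<noteq> 0\<close> unfolding P_def G_def[symmetric] by simp
  moreover have "sd_seq c p n = sd_seq c q n"
    using p_eq \<open>G \<noteq> 0\<close> by (intro sd_seq_scale) auto
  ultimately show ?thesis
    using sd_seq_minimal_period_coprime[OF assms(1) q_pos assms(4,5) q_sorted q_coprime] by simp
qed

end
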